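(* Let $I$ be an ideal of a multiplicative Lie algebra $G$. Then: (1) if $I\cap[G,G]=1$, then $Z(G/I)=Z(G)/I$; (2) if $I\cap(G\star G)=1$, then $LZ(G/I)=LZ(G)/I$; (3) if $I\cap{}^M[G,G]=1$, then $\mathcal Z(G/I)=\mathcal Z(G)/I$.
   Context: A multiplicative Lie algebra is a group $(G,\cdot)$ with a binary operation $\star$ such that for all $x,y,z\in G$: $x\star x=1$; $x\star(yz)=(x\star y)\,{}^y(x\star z)$; $(xy)\star z={}^x(y\star z)(x\star z)$; $((x\star y)\star{}^yz)((y\star z)\star{}^zx)((z\star x)\star{}^xy)=1$; ${}^z(x\star y)={}^zx\star{}^zy$, where ${}^xy=xyx^{-1}$. An ideal is a normal subgroup $I$ with $x\star y\in I$ for all $x\in G$, $y\in I$; $G/I$ carries the induced structure. $Z(G)$ is the group center, $LZ(G)=\{x\in G: x\star y=1\ \forall y\in G\}$ the Lie center, $\mathcal Z(G)=LZ(G)\cap Z(G)$; $[G,G]$ is the commutator subgroup, $G\star G$ the ideal generated by all $a\star b$, and ${}^M[G,G]=(G\star G)[G,G]$. *)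

theory Defs
  imports "HOL-Algebra.Algebra"
begin

definition conj :: "('a, 'b) monoid_scheme \<Rightarrow> 'a \<Rightarrow> 'a \<Rightarrow> 'a" where
  "conj G x y = x \<otimes>\<^bsub>G\<^esub> y \<otimes>\<^bsub>G\<^esub> inv\<^bsub>G\<^esub> x"

definition mult_lie_alg :: "('a, 'b) monoid_scheme \<Rightarrow> ('a \<Rightarrow> 'a \<Rightarrow> 'a) \<Rightarrow> bool" where
  "mult_lie_alg G st \<longleftrightarrow> group G
    \<and> (\<forall>x\<in>carrier G. \<forall>y\<in>carrier G. st x y \<in> carrier G)
    \<and> (\<forall>x\<in>carrier G. st x x = \<one>\<^bsub>G\<^esub>)
    \<and> (\<forall>x\<in>carrier G. \<forall>y\<in>carrier G. \<forall>z\<in>carrier G.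
          st x (y \<otimes>\<^bsub>G\<^esub> z) = st x y \<otimes>\<^bsub>G\<^esub> conj G y (st x z))
    \<and> (\<forall>x\<in>carrier G. \<forall>y\<in>carrier G. \<forall>z\<in>carrier G.
          st (x \<otimes>\<^bsub>G\<^esub> y) z = conj G x (st y z) \<otimes>\<^bsub>G\<^esub> st x z)
    \<and> (\<forall>x\<in>carrier G. \<forall>y\<in>carrier G. \<forall>z\<in>carrier G.
          st (st x y) (conj G y z) \<otimes>\<^bsub>G\<^esub> st (st y z) (conj G z x) \<otimes>\<^bsub>G\<^esub> st (st z x) (conj G x y)
            = \<one>\<^bsub>G\<^esub>)
    \<and> (\<forall>x\<in>carrier G. \<forall>y\<in>carrier G. \<forall>z\<in>carrier G.
          conj G z (st x y) = st (conj G z x) (conj G z y))"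

definition mla_ideal :: "('a, 'b) monoid_scheme \<Rightarrow> ('a \<Rightarrow> 'a \<Rightarrow> 'a) \<Rightarrow> 'a set \<Rightarrow> bool" where
  "mla_ideal G st I \<longleftrightarrow> I \<lhd> G \<and> (\<forall>x\<in>carrier G. \<forall>y\<in>I. st x y \<in> I)"

definition quot_star :: "('a, 'b) monoid_scheme \<Rightarrow> ('a \<Rightarrow> 'a \<Rightarrow> 'a) \<Rightarrow> 'a set \<Rightarrow> 'a set \<Rightarrow> 'a set \<Rightarrow> 'a set" where
  "quot_star G st I C D = I #>\<^bsub>G\<^esub> st (SOME x. x \<in> C) (SOME y. y \<in> D)"

definition grp_center :: "('a, 'b) monoid_scheme \<Rightarrow> 'a set" where
  "grp_center G = {x \<in> carrier G. \<forall>y\<in>carrier G. x \<otimes>\<^bsub>G\<^esub> y = y \<otimes>\<^bsub>G\<^esub> x}"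

definition lie_center :: "('a, 'b) monoid_scheme \<Rightarrow> ('a \<Rightarrow> 'a \<Rightarrow> 'a) \<Rightarrow> 'a set" where
  "lie_center G st = {x \<in> carrier G. \<forall>y\<in>carrier G. st x y = \<one>\<^bsub>G\<^esub>}"

definition mla_center :: "('a, 'b) monoid_scheme \<Rightarrow> ('a \<Rightarrow> 'a \<Rightarrow> 'a) \<Rightarrow> 'a set" where
  "mla_center G st = lie_center G st \<inter> grp_center G"

definition star_ideal :: "('a, 'b) monoid_scheme \<Rightarrow> ('a \<Rightarrow> 'a \<Rightarrow> 'a) \<Rightarrow> 'a set" where
  "star_ideal G st = \<Inter>{J. mla_ideal G st J \<and> {st a b | a b. a \<in> carrier G \<and> b \<in> carrier G} \<subseteq> J}"

definition comm_subgroup :: "('a, 'b) monoid_scheme \<Rightarrow> 'a set" where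
  "comm_subgroup G = derived G (carrier G)"

definition M_comm :: "('a, 'b) monoid_scheme \<Rightarrow> ('a \<Rightarrow> 'a \<Rightarrow> 'a) \<Rightarrow> 'a set" where
  "M_comm G st = star_ideal G st <#>\<^bsub>G\<^esub> comm_subgroup G"

text \<open>Image of a subset under the natural map \<open>G \<rightarrow> G/I\<close>, i.e. \<open>H/I\<close> meaning \<open>HI/I\<close>.\<close>
definition quot_img :: "('a, 'b) monoid_scheme \<Rightarrow> 'a set \<Rightarrow> 'a set \<Rightarrow> 'a set set" where
  "quot_img G I H = (\<lambda>x. I #>\<^bsub>G\<^esub> x) ` H"

end

theory Submission
  imports Defs
begin

text \<open>
  Everything is read off through the coset map \<open>x \<mapsto> Ix\<close>. The coset \<open>Ix\<close> is central in
  \<open>G/I\<close> iff every commutator \<open>[x,y]\<close> lies in \<open>I\<close>, and it lies in the Lie centre of \<open>G/I\<close> iff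
  every \<open>x \<star> y\<close> lies in \<open>I\<close>; the latter needs the induced operation to be well defined,
  which holds because \<open>I\<close> absorbs \<open>\<star>\<close> from both sides (\<open>y \<star> x = (x \<star> y)\<inverse>\<close>) and
  conjugation by elements of \<open>I\<close> is trivial modulo \<open>I\<close>. If \<open>I\<close> meets \<open>[G,G]\<close> (resp.
  \<open>G \<star> G\<close>) trivially, these conditions say exactly that \<open>x\<close> is central (resp. Lie central).
  Part (3) combines both, since \<open>[G,G]\<close> and \<open>G \<star> G\<close> lie in \<open>\<^sup>M[G,G]\<close>.
\<close>

lemma (in group) conj_closed [simp]:
  "a \<in> carrier G \<Longrightarrow> b \<in> carrier G \<Longrightarrow> conj G a b \<in> carrier G"
  by (simp add: conj_def)

lemma (in group) conj_mult:
  assumes "a \<in> carrier G" "x \<in> carrier G" "y \<in> carrier G"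
  shows "conj G a (x \<otimes> y) = conj G a x \<otimes> conj G a y"
  using assms by (simp add: conj_def m_assoc) (simp flip: m_assoc)

lemma (in group) conj_eq_one_iff:
  assumes "a \<in> carrier G" "w \<in> carrier G"
  shows "conj G a w = \<one> \<longleftrightarrow> w = \<one>"
  using assms by (auto simp: conj_def inv_solve_right' inv_solve_left' simp flip: m_assoc)

lemma (in group) commutator_eq_one_iff:
  assumes "x \<in> carrier G" "y \<in> carrier G"
  shows "x \<otimes> y \<otimes> inv x \<otimes> inv y = \<one> \<longleftrightarrow> x \<otimes> y = y \<otimes> x"
proof -
  have "x \<otimes> y \<otimes> inv x \<otimes> inv y = \<one> \<longleftrightarrow> x \<otimes> y \<otimes> inv x = y"
    using assms by (simp add: inv_solve_right')
  also have "\<dots> \<longleftrightarrow> x \<otimes> y = y \<otimes> x"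
    using assms by (simp add: inv_solve_right')
  finally show ?thesis .
qed

lemma (in group_hom) hom_conj_eq_of_hom_one:
  assumes "a \<in> carrier G" "b \<in> carrier G" "h a = \<one>\<^bsub>H\<^esub>"
  shows "h (conj G a b) = h b"
  using assms by (simp add: conj_def)

lemma (in group) set_mult_superset_left:
  "A \<subseteq> carrier G \<Longrightarrow> \<one> \<in> B \<Longrightarrow> A \<subseteq> A <#> B"
  unfolding set_mult_def by force

lemma (in group) set_mult_superset_right:
  "B \<subseteq> carrier G \<Longrightarrow> \<one> \<in> A \<Longrightarrow> B \<subseteq> A <#> B"
  unfolding set_mult_def by force

lemma (in group) commutator_in_comm_subgroup:
  "x \<in> carrier G \<Longrightarrow> y \<in> carrier G \<Longrightarrow> x \<otimes> y \<otimes> inv x \<otimes> inv y \<in> comm_subgroup G"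
  unfolding comm_subgroup_def derived_def by (rule generate.incl) blast

lemma (in group) subgroup_comm_subgroup: "subgroup (comm_subgroup G) G"
  unfolding comm_subgroup_def derived_def
  by (rule generate_is_subgroup[OF derived_set_in_carrier]) simp

lemma eq_quot_imgI:
  fixes G (structure)
  assumes "S \<subseteq> carrier (G Mod H)" "T \<subseteq> carrier G"
    and "\<And>x. x \<in> carrier G \<Longrightarrow> H #> x \<in> S \<longleftrightarrow> x \<in> T"
  shows "S = quot_img G H T"
  using assms unfolding quot_img_def carrier_FactGroup by blast

lemma (in normal) rcos_in_grp_center_iff:
  assumes x: "x \<in> carrier G"
  shows "H #> x \<in> grp_center (G Mod H) \<longleftrightarrow> (\<forall>y\<in>carrier G. x \<otimes> y \<otimes> inv x \<otimes> inv y \<in> H)"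
proof -
  interpret proj: group_hom G "G Mod H" "(#>) H"
    by (simp add: group_hom_def group_hom_axioms_def factorgroup_is_group r_coset_hom_Mod)
  have "H #> (x \<otimes> y \<otimes> inv x \<otimes> inv y) = H \<longleftrightarrow> (H #> x) <#> (H #> y) = (H #> y) <#> (H #> x)"
    if y: "y \<in> carrier G" for y
    using x y proj.H.commutator_eq_one_iff[of "H #> x" "H #> y"] by simp
  moreover have "H #> (x \<otimes> y \<otimes> inv x \<otimes> inv y) = H \<longleftrightarrow> x \<otimes> y \<otimes> inv x \<otimes> inv y \<in> H"
    if y: "y \<in> carrier G" for y
    using x y coset_join1 coset_join2 subgroup_axioms by (meson inv_closed m_closed)
  ultimately show ?thesis
    using x by (auto simp: grp_center_def carrier_FactGroup)
qed

lemma (in normal) rcos_in_grp_center_iff_in_grp_center: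
  assumes "H \<inter> comm_subgroup G = {\<one>}" "x \<in> carrier G"
  shows "H #> x \<in> grp_center (G Mod H) \<longleftrightarrow> x \<in> grp_center G"
proof -
  have "H #> x \<in> grp_center (G Mod H) \<longleftrightarrow> (\<forall>y\<in>carrier G. x \<otimes> y \<otimes> inv x \<otimes> inv y \<in> H)"
    using assms(2) by (rule rcos_in_grp_center_iff)
  also have "\<dots> \<longleftrightarrow> (\<forall>y\<in>carrier G. x \<otimes> y \<otimes> inv x \<otimes> inv y = \<one>)"
  proof -
    have "z \<in> H \<longleftrightarrow> z = \<one>" if "z \<in> comm_subgroup G" for z
      using assms(1) that one_closed by blast
    then show ?thesis
      using commutator_in_comm_subgroup[OF assms(2)] by simp
  qed
  also have "\<dots> \<longleftrightarrow> x \<in> grp_center G"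
    using assms(2) by (auto simp: grp_center_def commutator_eq_one_iff)
  finally show ?thesis .
qed

lemma (in normal) grp_center_FactGroup:
  assumes "H \<inter> comm_subgroup G = {\<one>}"
  shows "grp_center (G Mod H) = quot_img G H (grp_center G)"
proof (rule eq_quot_imgI)
  show "grp_center (G Mod H) \<subseteq> carrier (G Mod H)" "grp_center G \<subseteq> carrier G"
    unfolding grp_center_def by (rule Collect_restrict)+
qed (rule rcos_in_grp_center_iff_in_grp_center[OF assms])

text \<open>Only the axioms of \<^const>\<open>mult_lie_alg\<close> that the argument uses.\<close>

locale mult_lie_algebra = group G for G (structure) +
  fixes st :: "'a \<Rightarrow> 'a \<Rightarrow> 'a"
  assumes star_closed [simp]: "x \<in> carrier G \<Longrightarrow> y \<in> carrier G \<Longrightarrow> st x y \<in> carrier G"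
    and star_self [simp]: "x \<in> carrier G \<Longrightarrow> st x x = \<one>"
    and star_mult_right: "x \<in> carrier G \<Longrightarrow> y \<in> carrier G \<Longrightarrow> z \<in> carrier G \<Longrightarrow>
          st x (y \<otimes> z) = st x y \<otimes> conj G y (st x z)"
    and star_mult_left: "x \<in> carrier G \<Longrightarrow> y \<in> carrier G \<Longrightarrow> z \<in> carrier G \<Longrightarrow>
          st (x \<otimes> y) z = conj G x (st y z) \<otimes> st x z"

lemma mult_lie_alg_imp_mult_lie_algebra: "mult_lie_alg G st \<Longrightarrow> mult_lie_algebra G st"
  unfolding mult_lie_alg_def mult_lie_algebra_def mult_lie_algebra_axioms_def by blast

context mult_lie_algebra
begin

lemma inv_star:
  assumes a: "a \<in> carrier G" and b: "b \<in> carrier G"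
  shows "inv (st a b) = st b a"
proof -
  have "\<one> = st (a \<otimes> b) (a \<otimes> b)"
    using a b by simp
  also have "\<dots> = conj G a (st b (a \<otimes> b)) \<otimes> st a (a \<otimes> b)"
    using a b by (intro star_mult_left) simp_all
  also have "\<dots> = conj G a (st b a) \<otimes> conj G a (st a b)"
    using a b by (simp add: star_mult_right conj_def)
  also have "\<dots> = conj G a (st b a \<otimes> st a b)"
    using a b by (simp add: conj_mult)
  finally have "conj G a (st b a \<otimes> st a b) = \<one>"
    by simp
  then have "st b a \<otimes> st a b = \<one>"
    using a b conj_eq_one_iff by simp
  then show ?thesis
    using a b by (simp add: inv_equality)
qed

lemma mla_ideal_star_left:
  assumes "mla_ideal G st I" "a \<in> I" "b \<in> carrier G"
  shows "st a b \<in> I"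
proof -
  interpret normal I G
    using assms(1) by (simp add: mla_ideal_def)
  have "st b a \<in> I"
    using assms by (simp add: mla_ideal_def)
  then show ?thesis
    using assms(2,3) inv_star[of b a] by (metis m_inv_closed mem_carrier)
qed

lemma hom_star_mult_ideal:
  assumes I: "mla_ideal G st I" and h: "group_hom G K h" and hI: "\<And>i. i \<in> I \<Longrightarrow> h i = \<one>\<^bsub>K\<^esub>"
    and i: "i \<in> I" and j: "j \<in> I" and x: "x \<in> carrier G" and y: "y \<in> carrier G"
  shows "h (st (i \<otimes> x) (j \<otimes> y)) = h (st x y)"
proof -
  interpret h: group_hom G K h by (rule h)
  have I_sub: "I \<subseteq> carrier G"
    using I by (simp add: mla_ideal_def normal_imp_subgroup subgroup.subset)
  have ic: "i \<in> carrier G" and jc: "j \<in> carrier G"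
    using i j I_sub by auto
  have "h (st (i \<otimes> x) (j \<otimes> y)) = h (st (i \<otimes> x) j) \<otimes>\<^bsub>K\<^esub> h (conj G j (st (i \<otimes> x) y))"
    using ic jc x y by (simp add: star_mult_right)
  also have "\<dots> = h (st (i \<otimes> x) y)"
    using I ic jc j x y hI by (simp add: mla_ideal_def h.hom_conj_eq_of_hom_one)
  also have "\<dots> = h (conj G i (st x y)) \<otimes>\<^bsub>K\<^esub> h (st i y)"
    using ic x y by (simp add: star_mult_left)
  also have "\<dots> = h (st x y)"
    using I ic i x y hI by (simp add: mla_ideal_star_left h.hom_conj_eq_of_hom_one)
  finally show ?thesis .
qed

text \<open>Well-definedness of \<^const>\<open>quot_star\<close>: the chosen representatives are \<open>i \<otimes> x\<close>, \<open>j \<otimes> y\<close>.\<close>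

lemma quot_star_rcos:
  assumes I: "mla_ideal G st I" and x: "x \<in> carrier G" and y: "y \<in> carrier G"
  shows "quot_star G st I (I #> x) (I #> y) = I #> st x y"
proof -
  interpret normal I G
    using I by (simp add: mla_ideal_def)
  interpret proj: group_hom G "G Mod I" "(#>) I"
    by (simp add: group_hom_def group_hom_axioms_def factorgroup_is_group r_coset_hom_Mod)
  have some_rcos: "(SOME a'. a' \<in> I #> a) \<in> I #> a" if "a \<in> carrier G" for a
    using rcos_self[OF that subgroup_axioms] by (rule someI)
  obtain i j where "i \<in> I" "j \<in> I"
    and "(SOME x'. x' \<in> I #> x) = i \<otimes> x" "(SOME y'. y' \<in> I #> y) = j \<otimes> y"
    using some_rcos[OF x] some_rcos[OF y] unfolding r_coset_def by blast
  then show ?thesis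
    unfolding quot_star_def
    using hom_star_mult_ideal[OF I proj.group_hom_axioms _ _ _ x y] coset_join2 subgroup_axioms
    by simp
qed

lemma rcos_in_lie_center_iff:
  assumes I: "mla_ideal G st I" and x: "x \<in> carrier G"
  shows "I #> x \<in> lie_center (G Mod I) (quot_star G st I) \<longleftrightarrow> (\<forall>y\<in>carrier G. st x y \<in> I)"
proof -
  interpret normal I G
    using I by (simp add: mla_ideal_def)
  have "I #> st x y = I \<longleftrightarrow> st x y \<in> I" if "y \<in> carrier G" for y
    using x that coset_join1 coset_join2 subgroup_axioms by (meson star_closed)
  then show ?thesis
    using I x by (auto simp: lie_center_def carrier_FactGroup quot_star_rcos)
qed

lemma star_in_star_ideal:
  "a \<in> carrier G \<Longrightarrow> b \<in> carrier G \<Longrightarrow> st a b \<in> star_ideal G st"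
  unfolding star_ideal_def by blast

lemma rcos_in_lie_center_iff_in_lie_center:
  assumes "mla_ideal G st I" "I \<inter> star_ideal G st = {\<one>}" "x \<in> carrier G"
  shows "I #> x \<in> lie_center (G Mod I) (quot_star G st I) \<longleftrightarrow> x \<in> lie_center G st"
proof -
  have "I #> x \<in> lie_center (G Mod I) (quot_star G st I) \<longleftrightarrow> (\<forall>y\<in>carrier G. st x y \<in> I)"
    using assms(1,3) by (rule rcos_in_lie_center_iff)
  also have "\<dots> \<longleftrightarrow> x \<in> lie_center G st"
  proof -
    have "\<one> \<in> I"
      using assms(1) by (simp add: mla_ideal_def normal_imp_subgroup subgroup.one_closed)
    then have "st x y \<in> I \<longleftrightarrow> st x y = \<one>" if "y \<in> carrier G" for y
      using assms(2) star_in_star_ideal[OF assms(3) that] by blast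
    then show ?thesis
      using assms(3) by (simp add: lie_center_def)
  qed
  finally show ?thesis .
qed

lemma lie_center_FactGroup:
  assumes "mla_ideal G st I" "I \<inter> star_ideal G st = {\<one>}"
  shows "lie_center (G Mod I) (quot_star G st I) = quot_img G I (lie_center G st)"
proof (rule eq_quot_imgI)
  show "lie_center (G Mod I) (quot_star G st I) \<subseteq> carrier (G Mod I)" "lie_center G st \<subseteq> carrier G"
    unfolding lie_center_def by (rule Collect_restrict)+
qed (rule rcos_in_lie_center_iff_in_lie_center[OF assms])

lemma star_ideal_subset_M_comm: "star_ideal G st \<subseteq> M_comm G st"
proof -
  have "star_ideal G st \<subseteq> carrier G"
    unfolding star_ideal_def
    by (rule Inter_lower) (auto simp: mla_ideal_def normal_self)
  then show ?thesis
    unfolding M_comm_def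
    by (intro set_mult_superset_left subgroup.one_closed[OF subgroup_comm_subgroup])
qed

lemma one_in_star_ideal: "\<one> \<in> star_ideal G st"
  unfolding star_ideal_def mla_ideal_def by (blast intro: subgroup.one_closed normal_imp_subgroup)

lemma comm_subgroup_subset_M_comm: "comm_subgroup G \<subseteq> M_comm G st"
  unfolding M_comm_def
  by (intro set_mult_superset_right one_in_star_ideal subgroup.subset[OF subgroup_comm_subgroup])

lemma mla_center_FactGroup:
  assumes I: "mla_ideal G st I" and trivial: "I \<inter> M_comm G st = {\<one>}"
  shows "mla_center (G Mod I) (quot_star G st I) = quot_img G I (mla_center G st)"
proof -
  interpret normal I G
    using I by (simp add: mla_ideal_def)
  have comm: "I \<inter> comm_subgroup G = {\<one>}"
    using trivial comm_subgroup_subset_M_comm subgroup.one_closed[OF subgroup_comm_subgroup] by blast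
  have star: "I \<inter> star_ideal G st = {\<one>}"
    using trivial star_ideal_subset_M_comm one_in_star_ideal by blast
  show ?thesis
    unfolding mla_center_def
  proof (rule eq_quot_imgI)
    show "lie_center (G Mod I) (quot_star G st I) \<inter> grp_center (G Mod I) \<subseteq> carrier (G Mod I)"
      "lie_center G st \<inter> grp_center G \<subseteq> carrier G"
      unfolding lie_center_def using Collect_restrict by blast+
  qed (use rcos_in_grp_center_iff_in_grp_center[OF comm]
        rcos_in_lie_center_iff_in_lie_center[OF I star] in blast)
qed

end

theorem lemma3p1:
  fixes G :: "('a, 'b) monoid_scheme" and st :: "'a \<Rightarrow> 'a \<Rightarrow> 'a" and I :: "'a set"
  assumes "mult_lie_alg G st" and "mla_ideal G st I"
  shows "(I \<inter> comm_subgroup G = {\<one>\<^bsub>G\<^esub>} \<longrightarrow>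
            grp_center (G Mod I) = quot_img G I (grp_center G))
       \<and> (I \<inter> star_ideal G st = {\<one>\<^bsub>G\<^esub>} \<longrightarrow>
            lie_center (G Mod I) (quot_star G st I) = quot_img G I (lie_center G st))
       \<and> (I \<inter> M_comm G st = {\<one>\<^bsub>G\<^esub>} \<longrightarrow>
            mla_center (G Mod I) (quot_star G st I) = quot_img G I (mla_center G st))"
proof -
  interpret mult_lie_algebra G st
    using assms(1) by (rule mult_lie_alg_imp_mult_lie_algebra)
  interpret normal I G
    using assms(2) by (simp add: mla_ideal_def)
  show ?thesis
    using assms(2) grp_center_FactGroup lie_center_FactGroup mla_center_FactGroup by blast
qed

end
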